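(* Let $F$ be a sensori-computational device and $N\subseteq Y(F)$. If there exists a sensori-computational device that output simulates $F$ modulo the $N$-shrink $\pi_N$ (with $L=\mathcal{L}(F)$, $\Sigma=Y(F)$), then there exists a sensori-computational device that output simulates $F$ modulo the $N$-pump $P_N$ (with $L=\mathcal{L}(F)$, $\Sigma=Y(F)$).
   Context: A sensori-computational device is a 6-tuple $F=(V,V_0,Y,\tau,C,c)$ where $V$ is a non-empty finite set of states, $V_0\subseteq V$ a non-empty set of initial states, $Y=Y(F)$ a finite set of observations, $\tau:V\times V\to\mathcal{P}(Y)$, $C$ a set of outputs, $c:V\to\mathcal{P}(C)\setminus\{\emptyset\}$. A string $y_1\cdots y_n$ reaches $w$ from $v$ if there are states $w_0=v,\dots,w_n=w$ with $y_i\in\tau(w_{i-1},w_i)$; $\mathcal{R}_F(s)$ is the set of states reached by $s$ from some initial state; $\mathcal{L}(F)=\{s\in Y^*:\mathcal{R}_F(s)\ne\emptyset\}$; $\mathcal{C}_F(s)=\bigcup_{v\in\mathcal{R}_F(s)}c(v)$. For a relation $R\subseteq A\times B$ between sets of strings, $F'$ output simulates $F$ modulo $R$ if for every $s\in\mathcal{L}(F)$: (1) some $t\in\mathcal{L}(F')$ has $s\,R\,t$; (2) every $t\in B$ with $s\,R\,t$ satisfies $t\in\mathcal{L}(F')$ and $\mathcal{C}_F(s)\supseteq\mathcal{C}_{F'}(t)$. For a set $\Sigma$, $L\subseteq\Sigma^*$ and $N\subseteq\Sigma$: the $N$-shrink is the function $\pi_N:L\to(\Sigma\setminus N)^*$ deleting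 every occurrence of symbols of $N$ from a string (so $\pi_N(\epsilon)=\epsilon$). The $N$-pump is the relation $P_N\subseteq L\times\Sigma^*$ defined as the smallest relation such that $\epsilon\,P_N\,\epsilon$, $s\,P_N\,s$ for every $s\in L$, and whenever $s\,P_N\,t_1\cdots t_\ell$, then $s\,P_N\,t_1\cdots t_k\,b\,t_{k+1}\cdots t_\ell$ for every $b\in N$ and $k\in\{1,\dots,\ell\}$ (elements of $N$ are inserted anywhere except before the first symbol). *)

theory Defs
  imports Main
begin

record ('v, 'y, 'c) scdevice =
  states :: "'v set"
  init :: "'v set"
  obs :: "'y set"
  trans :: "'v \<Rightarrow> 'v \<Rightarrow> 'y set"
  outs :: "'c set"
  outf :: "'v \<Rightarrow> 'c set"

definition scd :: "('v, 'y, 'c) scdevice \<Rightarrow> bool" where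
  "scd F \<longleftrightarrow> states F \<noteq> {} \<and> finite (states F) \<and>
     init F \<noteq> {} \<and> init F \<subseteq> states F \<and> finite (obs F) \<and>
     (\<forall>v w. trans F v w \<subseteq> obs F) \<and>
     (\<forall>v w. (v \<notin> states F \<or> w \<notin> states F) \<longrightarrow> trans F v w = {}) \<and>
     (\<forall>v \<in> states F. outf F v \<subseteq> outs F \<and> outf F v \<noteq> {})"

fun reach_from :: "('v, 'y, 'c) scdevice \<Rightarrow> 'v \<Rightarrow> 'y list \<Rightarrow> 'v set" where
  "reach_from F v [] = {v}"
| "reach_from F v (y # s) = (\<Union>w \<in> {w. y \<in> trans F v w}. reach_from F w s)"

definition reached :: "('v, 'y, 'c) scdevice \<Rightarrow> 'y list \<Rightarrow> 'v set" where
  "reached F s = (\<Union>v \<in> init F. reach_from F v s)"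

definition lang :: "('v, 'y, 'c) scdevice \<Rightarrow> 'y list set" where
  "lang F = {s. reached F s \<noteq> {}}"

definition outputs :: "('v, 'y, 'c) scdevice \<Rightarrow> 'y list \<Rightarrow> 'c set" where
  "outputs F s = (\<Union>v \<in> reached F s. outf F v)"

definition output_simulates ::
  "('w, 'y, 'c) scdevice \<Rightarrow> ('v, 'y, 'c) scdevice \<Rightarrow> ('y list \<times> 'y list) set \<Rightarrow> bool" where
  "output_simulates F' F R \<longleftrightarrow>
     (\<forall>s \<in> lang F. (\<exists>t \<in> lang F'. (s, t) \<in> R) \<and>
        (\<forall>t. (s, t) \<in> R \<longrightarrow> t \<in> lang F' \<and> outputs F' t \<subseteq> outputs F s))"

text \<open>The N-shrink on L, as a relation (graph of the function pi_N restricted to L).\<close>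
definition shrink :: "'y list set \<Rightarrow> 'y set \<Rightarrow> ('y list \<times> 'y list) set" where
  "shrink L N = {(s, filter (\<lambda>y. y \<notin> N) s) | s. s \<in> L}"

text \<open>The N-pump on L: insertion of N symbols anywhere except before the first symbol.\<close>
inductive_set pump :: "'y list set \<Rightarrow> 'y set \<Rightarrow> ('y list \<times> 'y list) set"
  for L :: "'y list set" and N :: "'y set" where
  pump_eps: "([], []) \<in> pump L N"
| pump_refl: "s \<in> L \<Longrightarrow> (s, s) \<in> pump L N"
| pump_ins: "(s, t) \<in> pump L N \<Longrightarrow> b \<in> N \<Longrightarrow> 1 \<le> k \<Longrightarrow> k \<le> length t \<Longrightarrow>
     (s, take k t @ b # drop k t) \<in> pump L N"

end

theory Submission
  imports Defs
begin

text \<open>Pumping only inserts symbols of N, so it does not change the N-shrink. Hence it suffices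
to turn a device G that simulates F modulo the shrink into one that reads a string t exactly as
G reads its shrink: add a self-loop labelled by all of N at every state of G and delete N from
the remaining transitions. Renaming the states injectively into nat gives the required state type.\<close>

lemma pump_filter_eq:
  "(s, t) \<in> pump L N \<Longrightarrow> filter (\<lambda>y. y \<notin> N) t = filter (\<lambda>y. y \<notin> N) s"
proof (induction rule: pump.induct)
  case (pump_ins s t b k)
  have "filter (\<lambda>y. y \<notin> N) (take k t @ b # drop k t) = filter (\<lambda>y. y \<notin> N) t"
    using \<open>b \<in> N\<close> by (metis filter_append filter.simps(2) append_take_drop_id)
  with pump_ins.IH show ?case by simp
qed auto

lemma scd_trans_states:
  "scd F \<Longrightarrow> y \<in> trans F v w \<Longrightarrow> v \<in> states F \<and> w \<in> states F"
  unfolding scd_def by blast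

lemma reached_subset_states: "scd F \<Longrightarrow> reached F s \<subseteq> states F"
proof -
  assume F: "scd F"
  have "reach_from F v s \<subseteq> states F" if "v \<in> states F" for v
    using that by (induction s arbitrary: v) (auto dest: scd_trans_states[OF F])
  with F show ?thesis unfolding reached_def scd_def by blast
qed

definition add_loops :: "('w, 'y, 'c) scdevice \<Rightarrow> 'y set \<Rightarrow> ('w, 'y, 'c) scdevice" where
  "add_loops G N = G\<lparr> obs := obs G \<union> N,
     trans := (\<lambda>v w. (trans G v w - N) \<union> (if v = w \<and> v \<in> states G then N else {})) \<rparr>"

lemma add_loops_simps [simp]:
  "states (add_loops G N) = states G" "init (add_loops G N) = init G"
  "obs (add_loops G N) = obs G \<union> N" "outs (add_loops G N) = outs G"
  "outf (add_loops G N) = outf G"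
  by (simp_all add: add_loops_def)

lemma reach_from_add_loops:
  assumes "scd G" "v \<in> states G"
  shows "reach_from (add_loops G N) v t = reach_from G v (filter (\<lambda>y. y \<notin> N) t)"
  using assms(2)
proof (induction t arbitrary: v)
  case (Cons y t)
  show ?case
  proof (cases "y \<in> N")
    case True
    then have "{w. y \<in> trans (add_loops G N) v w} = {v}"
      using Cons.prems by (auto simp: add_loops_def)
    with True Cons show ?thesis by simp
  next
    case False
    then have "{w. y \<in> trans (add_loops G N) v w} = {w. y \<in> trans G v w}"
      by (auto simp: add_loops_def)
    with False Cons show ?thesis by (auto dest: scd_trans_states[OF assms(1)])
  qed
qed simp

lemma reached_add_loops:
  assumes "scd G"
  shows "reached (add_loops G N) t = reached G (filter (\<lambda>y. y \<notin> N) t)"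
proof -
  have "init G \<subseteq> states G" using assms by (simp add: scd_def)
  then show ?thesis
    unfolding reached_def by (auto intro!: SUP_cong simp: reach_from_add_loops[OF assms])
qed

lemma lang_add_loops:
  "scd G \<Longrightarrow> t \<in> lang (add_loops G N) \<longleftrightarrow> filter (\<lambda>y. y \<notin> N) t \<in> lang G"
  by (simp add: lang_def reached_add_loops)

lemma outputs_add_loops:
  "scd G \<Longrightarrow> outputs (add_loops G N) t = outputs G (filter (\<lambda>y. y \<notin> N) t)"
  by (simp add: outputs_def reached_add_loops)

lemma scd_add_loops: "scd G \<Longrightarrow> finite N \<Longrightarrow> scd (add_loops G N)"
  unfolding scd_def by (auto simp: add_loops_def)

lemma output_simulates_pump_add_loops:
  assumes G: "scd G" and sim: "output_simulates G F (shrink (lang F) N)"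
  shows "output_simulates (add_loops G N) F (pump (lang F) N)"
  unfolding output_simulates_def
proof (intro ballI conjI allI impI)
  fix s assume s: "s \<in> lang F"
  then have "(s, filter (\<lambda>y. y \<notin> N) s) \<in> shrink (lang F) N"
    by (auto simp: shrink_def)
  with s sim have sG: "filter (\<lambda>y. y \<notin> N) s \<in> lang G"
    and out: "outputs G (filter (\<lambda>y. y \<notin> N) s) \<subseteq> outputs F s"
    unfolding output_simulates_def by blast+
  show "\<exists>t \<in> lang (add_loops G N). (s, t) \<in> pump (lang F) N"
    using s sG pump_refl lang_add_loops[OF G] by blast
  fix t assume "(s, t) \<in> pump (lang F) N"
  then have "filter (\<lambda>y. y \<notin> N) t = filter (\<lambda>y. y \<notin> N) s"
    by (rule pump_filter_eq)
  then show "t \<in> lang (add_loops G N)" "outputs (add_loops G N) t \<subseteq> outputs F s"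
    using sG out by (simp_all add: lang_add_loops[OF G] outputs_add_loops[OF G])
qed

definition rename_states :: "('w, 'y, 'c) scdevice \<Rightarrow> ('w \<Rightarrow> 'u) \<Rightarrow> ('u, 'y, 'c) scdevice" where
  "rename_states G f = \<lparr> states = f ` states G, init = f ` init G, obs = obs G,
     trans = (\<lambda>i j. if i \<in> f ` states G \<and> j \<in> f ` states G
                    then trans G (inv_into (states G) f i) (inv_into (states G) f j) else {}),
     outs = outs G, outf = (\<lambda>i. outf G (inv_into (states G) f i)) \<rparr>"

lemma rename_states_simps [simp]:
  "states (rename_states G f) = f ` states G" "init (rename_states G f) = f ` init G"
  "obs (rename_states G f) = obs G" "outs (rename_states G f) = outs G"
  "outf (rename_states G f) = (\<lambda>i. outf G (inv_into (states G) f i))"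
  by (simp_all add: rename_states_def)

lemma reach_from_rename_states:
  assumes "scd G" "inj_on f (states G)" "v \<in> states G"
  shows "reach_from (rename_states G f) (f v) t = f ` reach_from G v t"
  using assms(3)
proof (induction t arbitrary: v)
  case (Cons y t)
  have "{j. y \<in> trans (rename_states G f) (f v) j} = f ` {w. y \<in> trans G v w}"
    using Cons.prems assms(2) scd_trans_states[OF assms(1)]
    by (auto simp: rename_states_def inj_on_eq_iff)
  moreover have "reach_from (rename_states G f) (f w) t = f ` reach_from G w t"
    if "y \<in> trans G v w" for w
    using Cons.IH scd_trans_states[OF assms(1) that] by blast
  ultimately show ?case by (simp add: image_UN)
qed simp

lemma reached_rename_states:
  assumes "scd G" "inj_on f (states G)"
  shows "reached (rename_states G f) t = f ` reached G t"
proof -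
  have "init G \<subseteq> states G" using assms(1) by (simp add: scd_def)
  then have "(\<Union>v \<in> init G. reach_from (rename_states G f) (f v) t) =
      (\<Union>v \<in> init G. f ` reach_from G v t)"
    using reach_from_rename_states[OF assms] by (intro SUP_cong) auto
  then show ?thesis
    unfolding reached_def by (simp add: image_UN)
qed

lemma output_simulates_rename_states:
  assumes "scd G" "inj_on f (states G)"
  shows "output_simulates (rename_states G f) F R \<longleftrightarrow> output_simulates G F R"
proof -
  have "lang (rename_states G f) = lang G"
    by (simp add: lang_def reached_rename_states[OF assms])
  moreover have "outputs (rename_states G f) t = outputs G t" for t
  proof -
    have "inv_into (states G) f (f v) = v" if "v \<in> reached G t" for v
      using that reached_subset_states[OF assms(1)] assms(2) by (meson inv_into_f_f subsetD)
    then show ?thesis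
      by (simp add: outputs_def reached_rename_states[OF assms])
  qed
  ultimately show ?thesis by (simp add: output_simulates_def)
qed

lemma scd_rename_states:
  assumes "scd G" "inj_on f (states G)"
  shows "scd (rename_states G f)"
  using assms unfolding scd_def rename_states_def by auto

theorem lemma4:
  fixes F :: "('v, 'y, 'c) scdevice" and N :: "'y set"
  assumes "scd F"
    and "N \<subseteq> obs F"
    and "\<exists>F' :: ('w, 'y, 'c) scdevice. scd F' \<and> output_simulates F' F (shrink (lang F) N)"
  shows "\<exists>F'' :: (nat, 'y, 'c) scdevice. scd F'' \<and> output_simulates F'' F (pump (lang F) N)"
proof -
  obtain G :: "('w, 'y, 'c) scdevice" where G: "scd G" "output_simulates G F (shrink (lang F) N)"
    using assms(3) by blast
  have "finite N" using assms(1,2) by (auto simp: scd_def intro: finite_subset)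
  with G have H: "scd (add_loops G N)" "output_simulates (add_loops G N) F (pump (lang F) N)"
    by (simp_all add: scd_add_loops output_simulates_pump_add_loops)
  have "finite (states (add_loops G N))" using H(1) by (simp add: scd_def)
  then obtain f :: "'w \<Rightarrow> nat" where "inj_on f (states (add_loops G N))"
    using finite_imp_inj_to_nat_seg by blast
  with H have "scd (rename_states (add_loops G N) f)"
    and "output_simulates (rename_states (add_loops G N) f) F (pump (lang F) N)"
    by (simp_all add: scd_rename_states output_simulates_rename_states)
  then show ?thesis by blast
qed

end
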